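(* Let $R$ be a commutative ring and $n\ge3$. Let $(v,w)\in H(R^n)$ with $q(v,w)=v\cdot w^{\intercal}=1$, and let $g\in\operatorname{Epin}_{2n}(R)$. Then, computing in the Clifford algebra $\mathrm{Cl}$ of $(H(R^n),q)$, there exists $\sigma\in E_n(R)$ such that $$g\,(v,w)\,g^{-1}=\big(v\sigma,\;w(\sigma^{\intercal})^{-1}\big).$$
   Context: $H(R^n)=R^n\oplus(R^n)^*$ (elements written as pairs $(v,w)$ of row vectors in $R^n$) with quadratic form $q(v,w)=v\cdot w^{\intercal}$; let $e_1,\dots,e_n,f_1,\dots,f_n$ be its standard basis. $\mathrm{Cl}=\mathrm{Cl}_0\oplus\mathrm{Cl}_1$ is the Clifford algebra of $(H(R^n),q)$ with its $\mathbb{Z}/2$-grading, containing $H(R^n)$ in $\mathrm{Cl}_1$; $x\mapsto x^*$ is its canonical involution (the anti-automorphism that is the identity on $H(R^n)$). $\operatorname{Spin}_{2n}(R)=\{x\in\mathrm{Cl}_0: xx^*=1,\ xH(R^n)x^{-1}=H(R^n)\}$, and $\pi:\operatorname{Spin}_{2n}(R)\to O(H(R^n))$, $\pi(g)(u)=gug^{-1}$. Let $\partial=(1\ n+1)\cdots(n\ 2n)$ and $E^o_{ij}(\lambda)=I_{2n}+\lambda(e_{ij}-e_{\partial(j)\partial(i)})$ for $1\le i\ne j\le 2n$, $\lambda\in R$ ($e_{ij}$ matrix units); $EO_{2n}(R)$ is the group they generate, viewed as a group of orthogonal transformations of $H(R^n)$ via matrices in the ordered basis $(e_1,\dots,e_n,f_1,\dots,f_n)$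 (this group is closed under transposition). $\operatorname{Epin}_{2n}(R)=\pi^{-1}(EO_{2n}(R))$. $E_n(R)$ is the subgroup of $GL_n(R)$ generated by elementary matrices $I+\lambda e_{ij}$, $i\ne j$. *)

theory Defs
  imports "Jordan_Normal_Form.Matrix"
begin

definition unit_mat :: "nat \<Rightarrow> nat \<Rightarrow> nat \<Rightarrow> 'a::comm_ring_1 mat" where
  "unit_mat m i j = mat m m (\<lambda>(a,b). if a = i \<and> b = j then 1 else 0)"

definition elem_mat :: "nat \<Rightarrow> nat \<Rightarrow> nat \<Rightarrow> 'a::comm_ring_1 \<Rightarrow> 'a mat" where
  "elem_mat n i j l = 1\<^sub>m n + l \<cdot>\<^sub>m unit_mat n i j"

text \<open>E_n(R): the subgroup of GL_n(R) generated by elementary matrices.  Since the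
  inverse of I + l e_ij is I - l e_ij, this is the set of finite products of generators.\<close>
inductive_set elem_group :: "nat \<Rightarrow> 'a::comm_ring_1 mat set" for n where
  one: "1\<^sub>m n \<in> elem_group n"
| step: "A \<in> elem_group n \<Longrightarrow> i < n \<Longrightarrow> j < n \<Longrightarrow> i \<noteq> j \<Longrightarrow>
         elem_mat n i j l * A \<in> elem_group n"

text \<open>The involution partial of the index set {0..2n-1}: k <-> k+n (0-based version of
  (1 n+1)...(n 2n)).\<close>
definition hpart :: "nat \<Rightarrow> nat \<Rightarrow> nat" where
  "hpart n k = (if k < n then k + n else k - n)"

definition eo_gen :: "nat \<Rightarrow> nat \<Rightarrow> nat \<Rightarrow> 'a::comm_ring_1 \<Rightarrow> 'a mat" where
  "eo_gen n i j l = 1\<^sub>m (2*n) + l \<cdot>\<^sub>m (unit_mat (2*n) i j - unit_mat (2*n) (hpart n j) (hpart n i))"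

text \<open>EO_2n(R): group generated by the E^o_ij(l); generators are closed under inverses
  (E^o_ij(l)^{-1} = E^o_ij(-l)), so it is the set of finite products of generators.\<close>
inductive_set eo_group :: "nat \<Rightarrow> 'a::comm_ring_1 mat set" for n where
  one: "1\<^sub>m (2*n) \<in> eo_group n"
| step: "A \<in> eo_group n \<Longrightarrow> i < 2*n \<Longrightarrow> j < 2*n \<Longrightarrow> i \<noteq> j \<Longrightarrow>
         eo_gen n i j l * A \<in> eo_group n"

text \<open>H(R^n) is free with basis e_1..e_n,f_1..f_n; an element (v,w) is represented by
  its coordinate vector v @ w of dimension 2n.  The tensor algebra T(H(R^n)) is the free
  R-module on words over the letters 0..2n-1 (letter k < n is e_{k+1}, letter n+k is f_{k+1}),
  represented by finitely supported functions on words.\<close>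

type_synonym 'a tens = "nat list \<Rightarrow> 'a"

definition tens_carrier :: "nat \<Rightarrow> 'a::comm_ring_1 tens set" where
  "tens_carrier n = {f. finite {w. f w \<noteq> 0} \<and> (\<forall>w. f w \<noteq> 0 \<longrightarrow> set w \<subseteq> {..<2*n})}"

definition tzero :: "'a::comm_ring_1 tens" where "tzero = (\<lambda>_. 0)"
definition tone :: "'a::comm_ring_1 tens" where "tone = (\<lambda>w. if w = [] then 1 else 0)"
definition tadd :: "'a::comm_ring_1 tens \<Rightarrow> 'a tens \<Rightarrow> 'a tens" where
  "tadd f g = (\<lambda>w. f w + g w)"
definition tminus :: "'a::comm_ring_1 tens \<Rightarrow> 'a tens \<Rightarrow> 'a tens" where
  "tminus f g = (\<lambda>w. f w - g w)"
definition tsmult :: "'a::comm_ring_1 \<Rightarrow> 'a tens \<Rightarrow> 'a tens" where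
  "tsmult c f = (\<lambda>w. c * f w)"
definition tmul :: "'a::comm_ring_1 tens \<Rightarrow> 'a tens \<Rightarrow> 'a tens" where
  "tmul f g = (\<lambda>w. \<Sum>k\<le>length w. f (take k w) * g (drop k w))"

definition hyp_emb :: "nat \<Rightarrow> 'a::comm_ring_1 vec \<Rightarrow> 'a tens" where
  "hyp_emb n c = (\<lambda>w. case w of [k] \<Rightarrow> (if k < 2*n then c $ k else 0) | _ \<Rightarrow> 0)"

definition hyp_elems :: "nat \<Rightarrow> 'a::comm_ring_1 tens set" where
  "hyp_elems n = hyp_emb n ` carrier_vec (2*n)"

definition hq :: "nat \<Rightarrow> 'a::comm_ring_1 vec \<Rightarrow> 'a" where
  "hq n c = (\<Sum>i<n. c $ i * c $ (n + i))"

definition clif_rel :: "nat \<Rightarrow> 'a::comm_ring_1 vec \<Rightarrow> 'a tens" where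
  "clif_rel n c = tminus (tmul (hyp_emb n c) (hyp_emb n c)) (tsmult (hq n c) tone)"

text \<open>The two-sided ideal of T generated by u (x) u - q(u), u in H(R^n).\<close>
inductive_set clif_ideal :: "nat \<Rightarrow> 'a::comm_ring_1 tens set" for n where
  zero: "tzero \<in> clif_ideal n"
| step: "x \<in> clif_ideal n \<Longrightarrow> a \<in> tens_carrier n \<Longrightarrow> b \<in> tens_carrier n \<Longrightarrow>
         c \<in> carrier_vec (2*n) \<Longrightarrow> tadd x (tmul a (tmul (clif_rel n c) b)) \<in> clif_ideal n"

text \<open>Equality in Cl = T / I.\<close>
definition clif_eq :: "nat \<Rightarrow> 'a::comm_ring_1 tens \<Rightarrow> 'a tens \<Rightarrow> bool" where
  "clif_eq n x y \<longleftrightarrow> tminus x y \<in> clif_ideal n"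

text \<open>Canonical involution: reversal of words (identity on H, anti-multiplicative);
  it preserves the ideal, hence descends to Cl.\<close>
definition tinv :: "'a::comm_ring_1 tens \<Rightarrow> 'a tens" where
  "tinv f = (\<lambda>w. f (rev w))"

definition even_tens :: "'a::comm_ring_1 tens \<Rightarrow> bool" where
  "even_tens f \<longleftrightarrow> (\<forall>w. f w \<noteq> 0 \<longrightarrow> even (length w))"

definition clif_inverse :: "nat \<Rightarrow> 'a::comm_ring_1 tens \<Rightarrow> 'a tens \<Rightarrow> bool" where
  "clif_inverse n x y \<longleftrightarrow> y \<in> tens_carrier n \<and> clif_eq n (tmul x y) tone \<and> clif_eq n (tmul y x) tone"

text \<open>Spin_2n(R) = {x in Cl_0 : x x^* = 1, x H x^{-1} = H} (elements given by representatives).\<close>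
definition spin_set :: "nat \<Rightarrow> 'a::comm_ring_1 tens set" where
  "spin_set n = {x \<in> tens_carrier n.
      (\<exists>x0 \<in> tens_carrier n. even_tens x0 \<and> clif_eq n x x0) \<and>
      clif_eq n (tmul x (tinv x)) tone \<and>
      (\<exists>y. clif_inverse n x y \<and>
         (\<forall>u \<in> hyp_elems n. \<exists>u' \<in> hyp_elems n. clif_eq n (tmul x (tmul u y)) u') \<and>
         (\<forall>u' \<in> hyp_elems n. \<exists>u \<in> hyp_elems n. clif_eq n (tmul x (tmul u y)) u'))}"

text \<open>Epin_2n(R) = pi^{-1}(EO_2n(R)), pi(g)(u) = g u g^{-1}; the matrix of pi(g) in the basis
  (e_1..e_n,f_1..f_n) acts on coordinate (column) vectors.\<close>
definition epin_set :: "nat \<Rightarrow> 'a::comm_ring_1 tens set" where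
  "epin_set n = {g \<in> spin_set n. \<exists>M \<in> eo_group n. \<forall>y. clif_inverse n g y \<longrightarrow>
      (\<forall>c \<in> carrier_vec (2*n). clif_eq n (tmul g (tmul (hyp_emb n c) y)) (hyp_emb n (M *\<^sub>v c)))}"

end

theory Submission
  imports Defs
begin

(* By definition g acts on H(R^n) through a matrix M of EO_2n(R), so it suffices to show
   that every product M of generators E^o_ij(l) maps a pair (v, w) with v . w = 1 to
   (v sigma, w (sigma^T)^-1) for some sigma in E_n(R).  Such maps preserve v . w, so by
   induction this reduces to a single generator.  If i and j lie in the same block, the
   generator acts on v by an elementary matrix and on w by its inverse transpose.  Otherwise
   it fixes one component, say w, and adds to v a multiple l x of x = w_j e_i - w_i e_j.
   As x . w = 0 and v . w = 1, this is v |-> (I + l x w^T) v, and I + l w x^T lies in E_n(R)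
   for n >= 3 by Suslin's lemma: the part of w supported off {i, j} contributes column
   transvections, and the remaining part is a commutator of elementary matrices through a
   third index k. *)

definition transvection :: "nat \<Rightarrow> 'a::comm_ring_1 vec \<Rightarrow> 'a vec \<Rightarrow> 'a mat" where
  "transvection n s y = mat n n (\<lambda>(r, c). (if r = c then 1 else 0) + s $ r * y $ c)"

lemma transvection_carrier [simp]: "transvection n s y \<in> carrier_mat n n"
  and transvection_dim [simp]: "dim_row (transvection n s y) = n" "dim_col (transvection n s y) = n"
  by (simp_all add: transvection_def)

lemma index_transvection [simp]:
  "r < n \<Longrightarrow> c < n \<Longrightarrow> transvection n s y $$ (r, c) = (if r = c then 1 else 0) + s $ r * y $ c"
  by (simp add: transvection_def)

lemma transpose_transvection: "transpose_mat (transvection n s y) = transvection n y s"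
  by (rule eq_matI) (auto simp: mult.commute)

lemma transvection_smult:
  assumes "s \<in> carrier_vec n" "y \<in> carrier_vec n"
  shows "transvection n (c \<cdot>\<^sub>v s) y = transvection n s (c \<cdot>\<^sub>v y)"
  using assms by (intro eq_matI) auto

lemma transvection_zero: "transvection n (0\<^sub>v n) y = 1\<^sub>m n"
  by (rule eq_matI) auto

lemma transvection_mult_vec:
  assumes "s \<in> carrier_vec n" "y \<in> carrier_vec n" "v \<in> carrier_vec n"
  shows "transvection n s y *\<^sub>v v = v + (y \<bullet> v) \<cdot>\<^sub>v s"
proof (rule eq_vecI)
  fix r assume "r < dim_vec (v + (y \<bullet> v) \<cdot>\<^sub>v s)"
  then have r: "r < n" using assms by simp
  have "(transvection n s y *\<^sub>v v) $ r = (\<Sum>t<n. (if r = t then v $ t else 0) + s $ r * (y $ t * v $ t))"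
    using assms r by (auto simp: scalar_prod_def atLeast0LessThan algebra_simps intro!: sum.cong)
  also have "\<dots> = v $ r + s $ r * (y \<bullet> v)"
    using assms r by (simp add: sum.distrib scalar_prod_def atLeast0LessThan sum_distrib_left)
  finally show "(transvection n s y *\<^sub>v v) $ r = (v + (y \<bullet> v) \<cdot>\<^sub>v s) $ r"
    using assms r by (simp add: mult.commute)
qed (use assms in simp)

lemma transvection_mult_vec_orthogonal:
  assumes "s \<in> carrier_vec n" "y \<in> carrier_vec n" "v \<in> carrier_vec n" "y \<bullet> v = 0"
  shows "transvection n s y *\<^sub>v v = v"
  using assms by (auto simp: transvection_mult_vec intro!: eq_vecI)

lemma transvection_mult:
  assumes "s \<in> carrier_vec n" "y \<in> carrier_vec n" "s' \<in> carrier_vec n" "y' \<in> carrier_vec n"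
  shows "transvection n s y * transvection n s' y' =
    mat n n (\<lambda>(r, c). (if r = c then 1 else 0) + s $ r * y $ c + s' $ r * y' $ c + (y \<bullet> s') * s $ r * y' $ c)"
    (is "_ = ?P")
proof (rule eq_matI)
  fix r c assume "r < dim_row ?P" "c < dim_col ?P"
  then have rc: "r < n" "c < n" by auto
  have "(transvection n s y * transvection n s' y') $$ (r, c) =
      (\<Sum>t<n. (if r = t then (if t = c then 1 else 0) + s' $ t * y' $ c else 0)
         + (if t = c then s $ r * y $ t else 0) + (s $ r * y' $ c) * (y $ t * s' $ t))"
    using assms rc by (auto simp: scalar_prod_def atLeast0LessThan algebra_simps intro!: sum.cong)
  also have "\<dots> = (if r = c then 1 else 0) + s' $ r * y' $ c + s $ r * y $ c + (s $ r * y' $ c) * (y \<bullet> s')"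
    using assms rc by (simp add: sum.distrib scalar_prod_def atLeast0LessThan sum_distrib_left)
  finally show "(transvection n s y * transvection n s' y') $$ (r, c) = ?P $$ (r, c)"
    using rc by (simp add: algebra_simps)
qed auto

lemma transvection_mult_same_right:
  assumes "s \<in> carrier_vec n" "s' \<in> carrier_vec n" "y \<in> carrier_vec n" "y \<bullet> s' = 0"
  shows "transvection n s y * transvection n s' y = transvection n (s + s') y"
  using assms by (subst transvection_mult) (auto intro!: eq_matI simp: algebra_simps)

lemma transvection_mult_same_left:
  assumes "s \<in> carrier_vec n" "y \<in> carrier_vec n" "y' \<in> carrier_vec n" "y \<bullet> s = 0"
  shows "transvection n s y * transvection n s y' = transvection n s (y + y')"
  using assms by (subst transvection_mult) (auto intro!: eq_matI simp: algebra_simps)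

lemma transvection_mult_inverse:
  assumes "s \<in> carrier_vec n" "y \<in> carrier_vec n" "y \<bullet> s = 0"
  shows "transvection n s y * transvection n (- s) y = 1\<^sub>m n"
    and "transvection n (- s) y * transvection n s y = 1\<^sub>m n"
  using assms
  by (simp_all add: transvection_mult_same_right scalar_prod_uminus_right transvection_zero)

lemma elem_mat_eq_transvection:
  assumes "i < n" "j < n"
  shows "elem_mat n i j l = transvection n (l \<cdot>\<^sub>v unit_vec n i) (unit_vec n j)"
  using assms by (intro eq_matI) (auto simp: elem_mat_def unit_mat_def)

lemma elem_mat_carrier [simp]: "elem_mat n i j l \<in> carrier_mat n n"
  by (simp add: elem_mat_def unit_mat_def)

lemma transpose_elem_mat:
  assumes "i < n" "j < n"
  shows "transpose_mat (elem_mat n i j l) = elem_mat n j i l"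
  using assms by (simp add: elem_mat_eq_transvection transpose_transvection transvection_smult)

lemma elem_mat_mult_vec:
  assumes "i < n" "j < n" "v \<in> carrier_vec n"
  shows "elem_mat n i j l *\<^sub>v v = v + (l * v $ j) \<cdot>\<^sub>v unit_vec n i"
  using assms by (simp add: elem_mat_eq_transvection transvection_mult_vec smult_smult_assoc mult.commute)

lemma elem_mat_mult_inverse:
  assumes "i < n" "j < n" "i \<noteq> j"
  shows "elem_mat n i j l * elem_mat n i j (- l) = 1\<^sub>m n"
proof -
  have "- (l \<cdot>\<^sub>v unit_vec n i) = (- l) \<cdot>\<^sub>v unit_vec n i"
    by auto
  then show ?thesis
    using assms transvection_mult_inverse(1)[of "l \<cdot>\<^sub>v unit_vec n i" n "unit_vec n j"]
    by (simp add: elem_mat_eq_transvection)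
qed

lemma elem_group_carrier: "A \<in> elem_group n \<Longrightarrow> A \<in> carrier_mat n n"
  by (induction rule: elem_group.induct) (auto intro: mult_carrier_mat[OF elem_mat_carrier])

lemma elem_group_mult:
  assumes "A \<in> elem_group n" "B \<in> elem_group n"
  shows "A * B \<in> elem_group n"
  using assms
proof (induction rule: elem_group.induct)
  case one
  then show ?case using elem_group_carrier by (metis left_mult_one_mat)
next
  case (step A i j l)
  then have "elem_mat n i j l * A * B = elem_mat n i j l * (A * B)"
    by (meson assoc_mult_mat elem_group_carrier elem_mat_carrier)
  then show ?case using step by (simp add: elem_group.step)
qed

lemma elem_mat_in_elem_group:
  assumes "i < n" "j < n" "i \<noteq> j"
  shows "elem_mat n i j l \<in> elem_group n"
  using elem_group.step[OF elem_group.one assms, of l] by (simp add: right_mult_one_mat[OF elem_mat_carrier])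

lemma transpose_elem_group: "A \<in> elem_group n \<Longrightarrow> transpose_mat A \<in> elem_group n"
proof (induction rule: elem_group.induct)
  case one
  then show ?case by (simp add: elem_group.one)
next
  case (step A i j l)
  then have "transpose_mat (elem_mat n i j l * A) = transpose_mat A * elem_mat n j i l"
    by (simp add: transpose_mult[OF elem_mat_carrier elem_group_carrier] transpose_elem_mat)
  then show ?case using step by (simp add: elem_group_mult elem_mat_in_elem_group)
qed

lemma column_transvection_in_elem_group:
  assumes "j < n" "t \<in> carrier_vec n" "t $ j = 0"
  shows "transvection n t (unit_vec n j) \<in> elem_group n"
proof -
  let ?t = "\<lambda>K. vec n (\<lambda>r. if r \<in> K then t $ r else 0)"
  have "transvection n (?t K) (unit_vec n j) \<in> elem_group n" if "finite K" for K
    using that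
  proof (induction K rule: finite_induct)
    case empty
    then show ?case by (simp add: transvection_zero[unfolded zero_vec_def] elem_group.one)
  next
    case (insert k K)
    show ?case
    proof (cases "k < n \<and> k \<noteq> j")
      case True
      have "?t (insert k K) = t $ k \<cdot>\<^sub>v unit_vec n k + ?t K"
        using insert.hyps(2) True by (intro eq_vecI) auto
      then have "transvection n (?t (insert k K)) (unit_vec n j) =
          elem_mat n k j (t $ k) * transvection n (?t K) (unit_vec n j)"
        using True assms insert.hyps(2)
        by (simp add: elem_mat_eq_transvection transvection_mult_same_right)
      then show ?thesis
        using True assms insert.IH by (simp add: elem_group_mult elem_mat_in_elem_group)
    next
      case False
      then have "?t (insert k K) = ?t K"
        using assms by (intro eq_vecI) auto
      then show ?thesis using insert.IH by simp
    qed
  qed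
  moreover have "?t {..<n} = t"
    using assms by (intro eq_vecI) auto
  ultimately show ?thesis by (metis finite_lessThan)
qed

(* The commutator of T(s, e_k) and T(e_k, y) is T(s, y). *)
lemma transvection_in_elem_group:
  assumes "k < n" "s \<in> carrier_vec n" "y \<in> carrier_vec n" "s $ k = 0" "y $ k = 0" "y \<bullet> s = 0"
  shows "transvection n s y \<in> elem_group n"
proof -
  define e where "e = (unit_vec n k :: 'a vec)"
  have e [simp]: "e \<in> carrier_vec n" "dim_vec e = n" "e \<bullet> e = 1" "e \<bullet> s = 0" "y \<bullet> - e = 0"
    using assms by (simp_all add: e_def scalar_prod_uminus_right)
  have [simp]: "dim_vec s = n" "dim_vec y = n"
    using assms by auto
  let ?X = "transvection n s e" and ?Y = "transvection n e y"
  have XY: "?X * ?Y = transvection n (e + s) y * ?X"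
    using assms by (simp add: transvection_mult) (intro eq_matI; simp add: algebra_simps)
  have "e + s + - e = s"
    by (intro eq_vecI) auto
  then have "transvection n s y = transvection n (e + s) y * transvection n (- e) y"
    using assms by (simp add: transvection_mult_same_right)
  also have "\<dots> = transvection n (e + s) y * (?X * transvection n (- s) e) * transvection n (- e) y"
    using assms by (simp add: transvection_mult_inverse)
  also have "\<dots> = transvection n (e + s) y * ?X * transvection n (- s) e * transvection n (- e) y"
    by (simp add: assoc_mult_mat[of _ n n _ n _ n])
  also have "\<dots> = ?X * ?Y * transvection n (- s) e * transvection n (- e) y"
    by (simp only: XY)
  also have "\<dots> = ?X * transpose_mat (transvection n y e) * transvection n (- s) e *
      transpose_mat (transvection n (- y) e)"
  proof -
    have "transvection n (- e) y = transpose_mat (transvection n (- y) e)"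
      by (intro eq_matI) auto
    then show ?thesis by (simp add: transpose_transvection)
  qed
  finally show ?thesis
    using assms
    by (simp add: column_transvection_in_elem_group transpose_elem_group elem_group_mult e_def)
qed

definition skew_vec :: "nat \<Rightarrow> nat \<Rightarrow> nat \<Rightarrow> 'a::comm_ring_1 vec \<Rightarrow> 'a vec" where
  "skew_vec n a b u = u $ b \<cdot>\<^sub>v unit_vec n a - u $ a \<cdot>\<^sub>v unit_vec n b"

lemma skew_vec_carrier [simp]: "skew_vec n a b u \<in> carrier_vec n"
  and skew_vec_dim [simp]: "dim_vec (skew_vec n a b u) = n"
  by (simp_all add: skew_vec_def)

lemma index_skew_vec [simp]:
  "a < n \<Longrightarrow> b < n \<Longrightarrow> r < n \<Longrightarrow>
    skew_vec n a b u $ r = (if r = a then u $ b else 0) - (if r = b then u $ a else 0)"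
  by (simp add: skew_vec_def)

lemma scalar_prod_skew_vec:
  assumes "a < n" "b < n" "x \<in> carrier_vec n"
  shows "skew_vec n a b u \<bullet> x = u $ b * x $ a - u $ a * x $ b"
  using assms by (simp add: skew_vec_def minus_scalar_prod_distrib[of _ n])

lemma skew_vec_orthogonal:
  assumes "a < n" "b < n" "u \<in> carrier_vec n"
  shows "skew_vec n a b u \<bullet> u = 0"
  using assms by (simp add: scalar_prod_skew_vec mult.commute)

lemma transvection_skew_in_elem_group:
  assumes "3 \<le> n" "a < n" "b < n" "u \<in> carrier_vec n"
  shows "transvection n u (c \<cdot>\<^sub>v skew_vec n a b u) \<in> elem_group n"
proof (cases "a = b")
  case True
  then have "skew_vec n a b u = 0\<^sub>v n"
    using assms by (intro eq_vecI) auto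
  then have "transvection n u (c \<cdot>\<^sub>v skew_vec n a b u) = 1\<^sub>m n"
    by (intro eq_matI) auto
  then show ?thesis by (simp add: elem_group.one)
next
  case False
  have "\<exists>k::nat. k < 3 \<and> k \<noteq> a \<and> k \<noteq> b"
    by presburger
  then obtain k where k: "k < n" "k \<noteq> a" "k \<noteq> b"
    using assms(1) by (meson less_le_trans)
  define y where "y = c \<cdot>\<^sub>v skew_vec n a b u"
  define u_ab where "u_ab = vec n (\<lambda>r. if r = a \<or> r = b then u $ r else 0)"
  define u_rest where "u_rest = vec n (\<lambda>r. if r = a \<or> r = b then 0 else u $ r)"
  have carrier: "y \<in> carrier_vec n" "u_ab \<in> carrier_vec n" "u_rest \<in> carrier_vec n"
    by (simp_all add: y_def u_ab_def u_rest_def)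
  have "transvection n u_ab y \<in> elem_group n"
    using assms k False carrier
    by (intro transvection_in_elem_group[of k]) (simp_all add: y_def u_ab_def scalar_prod_skew_vec)
  moreover have "transvection n u_rest y \<in> elem_group n"
  proof -
    have "y = (c * u $ b) \<cdot>\<^sub>v unit_vec n a + (- (c * u $ a)) \<cdot>\<^sub>v unit_vec n b"
      using assms by (intro eq_vecI) (auto simp: y_def algebra_simps)
    then have "transvection n u_rest y = transvection n ((c * u $ b) \<cdot>\<^sub>v u_rest) (unit_vec n a) *
        transvection n ((- (c * u $ a)) \<cdot>\<^sub>v u_rest) (unit_vec n b)"
      using assms by (simp add: transvection_smult transvection_mult_same_left u_rest_def)
    then show ?thesis
      using assms by (simp add: column_transvection_in_elem_group elem_group_mult u_rest_def)
  qed
  moreover have "u_ab + u_rest = u"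
    using assms by (intro eq_vecI) (auto simp: u_ab_def u_rest_def)
  moreover have "y \<bullet> u_rest = 0"
    using assms by (simp add: y_def u_rest_def scalar_prod_skew_vec)
  ultimately have "transvection n u y \<in> elem_group n"
    using carrier by (metis elem_group_mult transvection_mult_same_right)
  then show ?thesis by (simp add: y_def)
qed

lemma hpart_less: "k < 2 * n \<Longrightarrow> hpart n k < 2 * n"
  unfolding hpart_def by auto

lemma hpart_lower [simp]: "i < n \<Longrightarrow> hpart n i = n + i"
  and hpart_upper [simp]: "hpart n (n + i) = i"
  by (simp_all add: hpart_def)

lemma eo_gen_carrier: "eo_gen n i j l \<in> carrier_mat (2 * n) (2 * n)"
  unfolding carrier_mat_def eo_gen_def unit_mat_def by simp

lemma eo_gen_mult_vec:
  assumes "i < 2 * n" "j < 2 * n" "x \<in> carrier_vec (2 * n)"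
  shows "eo_gen n i j l *\<^sub>v x =
    x + l \<cdot>\<^sub>v (x $ j \<cdot>\<^sub>v unit_vec (2 * n) i - x $ hpart n i \<cdot>\<^sub>v unit_vec (2 * n) (hpart n j))"
    (is "_ = ?x")
proof (rule eq_vecI)
  fix r assume "r < dim_vec ?x"
  then have r: "r < 2 * n" by simp
  let ?d = "\<lambda>P. if P then 1 else (0::'a)"
  have "(eo_gen n i j l *\<^sub>v x) $ r =
      (\<Sum>t<2 * n. (?d (r = t) + l * (?d (r = i \<and> t = j) - ?d (r = hpart n j \<and> t = hpart n i))) * x $ t)"
    using assms r by (simp add: eo_gen_def unit_mat_def scalar_prod_def atLeast0LessThan eq_commute[of _ r])
  also have "\<dots> = (\<Sum>t<2 * n. ?d (r = t) * x $ t) + l * ((\<Sum>t<2 * n. ?d (r = i \<and> t = j) * x $ t)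
      - (\<Sum>t<2 * n. ?d (r = hpart n j \<and> t = hpart n i) * x $ t))"
    by (simp add: algebra_simps sum.distrib sum_subtractf sum_distrib_left)
  also have "\<dots> = x $ r + l * ((if r = i then x $ j else 0) - (if r = hpart n j then x $ hpart n i else 0))"
    using assms r hpart_less[OF assms(1)]
    by (cases "r = i"; cases "r = hpart n j")
      (simp_all add: sum.delta sum.delta' if_distrib[of "\<lambda>c. c * _"] cong: if_cong)
  finally show "(eo_gen n i j l *\<^sub>v x) $ r = ?x $ r"
    using assms r hpart_less[OF assms(2)] by auto
qed (use assms in \<open>simp add: eo_gen_def unit_mat_def\<close>)

lemma append_vec_carrier_double:
  "v \<in> carrier_vec n \<Longrightarrow> w \<in> carrier_vec n \<Longrightarrow> v @\<^sub>v w \<in> carrier_vec (2 * n)"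
  by (simp add: mult_2)

lemma eo_gen_upper_mult_vec:
  assumes "i < n" "j < n" "v \<in> carrier_vec n" "w \<in> carrier_vec n"
  shows "eo_gen n i j l *\<^sub>v (v @\<^sub>v w) = (elem_mat n i j l *\<^sub>v v) @\<^sub>v (elem_mat n j i (- l) *\<^sub>v w)"
  using assms
  by (simp add: eo_gen_mult_vec append_vec_carrier_double elem_mat_mult_vec)
    (intro eq_vecI; auto simp: algebra_simps)

lemma eo_gen_lower_mult_vec:
  assumes "i < n" "j < n" "v \<in> carrier_vec n" "w \<in> carrier_vec n"
  shows "eo_gen n (n + i) (n + j) l *\<^sub>v (v @\<^sub>v w) = (elem_mat n j i (- l) *\<^sub>v v) @\<^sub>v (elem_mat n i j l *\<^sub>v w)"
  using assms
  by (simp add: eo_gen_mult_vec append_vec_carrier_double elem_mat_mult_vec)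
    (intro eq_vecI; auto simp: algebra_simps)

lemma eo_gen_upper_lower_mult_vec:
  assumes "i < n" "j < n" "v \<in> carrier_vec n" "w \<in> carrier_vec n"
  shows "eo_gen n i (n + j) l *\<^sub>v (v @\<^sub>v w) = (v + l \<cdot>\<^sub>v skew_vec n i j w) @\<^sub>v w"
  using assms
  by (simp add: eo_gen_mult_vec append_vec_carrier_double)
    (intro eq_vecI; auto simp: algebra_simps)

lemma eo_gen_lower_upper_mult_vec:
  assumes "i < n" "j < n" "v \<in> carrier_vec n" "w \<in> carrier_vec n"
  shows "eo_gen n (n + i) j l *\<^sub>v (v @\<^sub>v w) = v @\<^sub>v (w + l \<cdot>\<^sub>v skew_vec n i j v)"
  using assms
  by (simp add: eo_gen_mult_vec append_vec_carrier_double)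
    (intro eq_vecI; auto simp: algebra_simps)

(* In column coordinates the pair (v sigma, w (sigma^T)^-1) of the paper is
   (sigma^T v, rho w) with rho = sigma^-1. *)
definition acts_elementarily :: "nat \<Rightarrow> 'a::comm_ring_1 mat \<Rightarrow> 'a vec \<Rightarrow> 'a vec \<Rightarrow> bool" where
  "acts_elementarily n M v w \<longleftrightarrow> (\<exists>\<sigma>\<in>elem_group n. \<exists>\<rho>\<in>carrier_mat n n.
     \<sigma> * \<rho> = 1\<^sub>m n \<and> \<rho> * \<sigma> = 1\<^sub>m n \<and> M *\<^sub>v (v @\<^sub>v w) = (transpose_mat \<sigma> *\<^sub>v v) @\<^sub>v (\<rho> *\<^sub>v w))"

lemma acts_elementarilyI:
  assumes "\<sigma> \<in> elem_group n" "\<rho> \<in> carrier_mat n n" "\<sigma> * \<rho> = 1\<^sub>m n" "\<rho> * \<sigma> = 1\<^sub>m n"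
    and "M *\<^sub>v (v @\<^sub>v w) = (transpose_mat \<sigma> *\<^sub>v v) @\<^sub>v (\<rho> *\<^sub>v w)"
  shows "acts_elementarily n M v w"
  using assms unfolding acts_elementarily_def by blast

lemma acts_elementarily_one:
  assumes "v \<in> carrier_vec n" "w \<in> carrier_vec n"
  shows "acts_elementarily n (1\<^sub>m (2 * n)) v w"
  using assms
  by (intro acts_elementarilyI[of "1\<^sub>m n" _ "1\<^sub>m n"]) (auto simp: elem_group.one append_vec_carrier_double)

lemma scalar_prod_transpose_inverse:
  fixes \<sigma> :: "'a::comm_ring_1 mat"
  assumes "\<sigma> \<in> carrier_mat n n" "\<rho> \<in> carrier_mat n n" "\<sigma> * \<rho> = 1\<^sub>m n"
    and "v \<in> carrier_vec n" "w \<in> carrier_vec n"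
  shows "(transpose_mat \<sigma> *\<^sub>v v) \<bullet> (\<rho> *\<^sub>v w) = v \<bullet> w"
proof -
  have "(transpose_mat \<sigma> *\<^sub>v v) \<bullet> (\<rho> *\<^sub>v w) = v \<bullet> (\<sigma> *\<^sub>v (\<rho> *\<^sub>v w))"
    using transpose_vec_mult_scalar[OF assms(1) mult_mat_vec_carrier[OF assms(2,5)] assms(4)] .
  also have "\<sigma> *\<^sub>v (\<rho> *\<^sub>v w) = w"
    using assms by (simp flip: assoc_mult_mat_vec[of _ n n _ n])
  finally show ?thesis .
qed

lemma mult_inverse_mat:
  fixes A :: "'a::semiring_1 mat"
  assumes "A \<in> carrier_mat n n" "A' \<in> carrier_mat n n" "B \<in> carrier_mat n n" "B' \<in> carrier_mat n n"
    and "A * A' = 1\<^sub>m n" "B * B' = 1\<^sub>m n"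
  shows "(A * B) * (B' * A') = 1\<^sub>m n"
proof -
  have "(A * B) * (B' * A') = A * ((B * B') * A')"
    using assms(1-4) by (simp add: assoc_mult_mat[of _ n n _ n _ n])
  also have "\<dots> = 1\<^sub>m n"
    using assms by (simp add: left_mult_one_mat[OF assms(2)])
  finally show ?thesis .
qed

lemma acts_elementarily_mult:
  assumes "A \<in> carrier_mat (2 * n) (2 * n)" "B \<in> carrier_mat (2 * n) (2 * n)"
    and "v \<in> carrier_vec n" "w \<in> carrier_vec n"
    and "acts_elementarily n A v w"
    and "\<And>v' w'. v' \<in> carrier_vec n \<Longrightarrow> w' \<in> carrier_vec n \<Longrightarrow> v' \<bullet> w' = v \<bullet> w \<Longrightarrow>
      acts_elementarily n B v' w'"
  shows "acts_elementarily n (B * A) v w"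
proof -
  obtain \<sigma> \<rho> where \<sigma>: "\<sigma> \<in> elem_group n" and \<rho>: "\<rho> \<in> carrier_mat n n"
    and inv: "\<sigma> * \<rho> = 1\<^sub>m n" "\<rho> * \<sigma> = 1\<^sub>m n"
    and A: "A *\<^sub>v (v @\<^sub>v w) = (transpose_mat \<sigma> *\<^sub>v v) @\<^sub>v (\<rho> *\<^sub>v w)"
    using assms(5) unfolding acts_elementarily_def by blast
  have \<sigma>_carrier: "\<sigma> \<in> carrier_mat n n"
    using \<sigma> by (rule elem_group_carrier)
  have "acts_elementarily n B (transpose_mat \<sigma> *\<^sub>v v) (\<rho> *\<^sub>v w)"
    using assms \<sigma>_carrier \<rho> inv by (intro assms(6)) (auto simp: scalar_prod_transpose_inverse)
  then obtain \<sigma>' \<rho>' where \<sigma>': "\<sigma>' \<in> elem_group n" and \<rho>': "\<rho>' \<in> carrier_mat n n"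
    and inv': "\<sigma>' * \<rho>' = 1\<^sub>m n" "\<rho>' * \<sigma>' = 1\<^sub>m n"
    and B: "B *\<^sub>v ((transpose_mat \<sigma> *\<^sub>v v) @\<^sub>v (\<rho> *\<^sub>v w)) =
      (transpose_mat \<sigma>' *\<^sub>v (transpose_mat \<sigma> *\<^sub>v v)) @\<^sub>v (\<rho>' *\<^sub>v (\<rho> *\<^sub>v w))"
    unfolding acts_elementarily_def by blast
  have \<sigma>'_carrier: "\<sigma>' \<in> carrier_mat n n"
    using \<sigma>' by (rule elem_group_carrier)
  show ?thesis
  proof (rule acts_elementarilyI)
    show "\<sigma> * \<sigma>' \<in> elem_group n"
      using \<sigma> \<sigma>' by (rule elem_group_mult)
    show "(\<sigma> * \<sigma>') * (\<rho>' * \<rho>) = 1\<^sub>m n" "(\<rho>' * \<rho>) * (\<sigma> * \<sigma>') = 1\<^sub>m n"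
      using \<sigma>_carrier \<sigma>'_carrier \<rho> \<rho>' inv inv' by (simp_all add: mult_inverse_mat)
    show "B * A *\<^sub>v (v @\<^sub>v w) = (transpose_mat (\<sigma> * \<sigma>') *\<^sub>v v) @\<^sub>v (\<rho>' * \<rho> *\<^sub>v w)"
      using assms(1-4) \<sigma>_carrier \<sigma>'_carrier \<rho> \<rho>' A B
      by (simp add: append_vec_carrier_double transpose_mult[of _ n n] assoc_mult_mat_vec[of B "2 * n" "2 * n"])
  qed (use \<rho> \<rho>' in simp)
qed

lemma eo_gen_upper_acts_elementarily:
  assumes "i < n" "j < n" "i \<noteq> j" "v \<in> carrier_vec n" "w \<in> carrier_vec n"
  shows "acts_elementarily n (eo_gen n i j l) v w"
  using elem_mat_mult_inverse[of j n i l] elem_mat_mult_inverse[of j n i "- l"] assms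
  by (auto intro!: acts_elementarilyI[of "elem_mat n j i l" _ "elem_mat n j i (- l)"]
      simp: elem_mat_in_elem_group eo_gen_upper_mult_vec transpose_elem_mat)

lemma eo_gen_lower_acts_elementarily:
  assumes "i < n" "j < n" "i \<noteq> j" "v \<in> carrier_vec n" "w \<in> carrier_vec n"
  shows "acts_elementarily n (eo_gen n (n + i) (n + j) l) v w"
  using elem_mat_mult_inverse[of i n j l] elem_mat_mult_inverse[of i n j "- l"] assms
  by (auto intro!: acts_elementarilyI[of "elem_mat n i j (- l)" _ "elem_mat n i j l"]
      simp: elem_mat_in_elem_group eo_gen_lower_mult_vec transpose_elem_mat)

lemma eo_gen_upper_lower_acts_elementarily:
  assumes "3 \<le> n" "i < n" "j < n" "v \<in> carrier_vec n" "w \<in> carrier_vec n" "v \<bullet> w = 1"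
  shows "acts_elementarily n (eo_gen n i (n + j) l) v w"
proof -
  define y where "y = l \<cdot>\<^sub>v skew_vec n i j w"
  have y: "y \<in> carrier_vec n" "y \<bullet> w = 0"
    using assms by (simp_all add: y_def skew_vec_orthogonal)
  show ?thesis
  proof (rule acts_elementarilyI)
    show "transvection n w y \<in> elem_group n"
      using assms by (simp add: y_def transvection_skew_in_elem_group)
    show "transvection n w y * transvection n (- w) y = 1\<^sub>m n"
      "transvection n (- w) y * transvection n w y = 1\<^sub>m n"
      using assms y by (simp_all add: transvection_mult_inverse)
    have "transpose_mat (transvection n w y) *\<^sub>v v = v + y"
      using assms y by (simp add: transpose_transvection transvection_mult_vec comm_scalar_prod[of w n v])
    then show "eo_gen n i (n + j) l *\<^sub>v (v @\<^sub>v w) =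
        (transpose_mat (transvection n w y) *\<^sub>v v) @\<^sub>v (transvection n (- w) y *\<^sub>v w)"
      using assms y by (simp add: eo_gen_upper_lower_mult_vec transvection_mult_vec_orthogonal y_def)
  qed simp
qed

lemma eo_gen_lower_upper_acts_elementarily:
  assumes "3 \<le> n" "i < n" "j < n" "v \<in> carrier_vec n" "w \<in> carrier_vec n" "v \<bullet> w = 1"
  shows "acts_elementarily n (eo_gen n (n + i) j l) v w"
proof -
  define y where "y = l \<cdot>\<^sub>v skew_vec n i j v"
  have y: "y \<in> carrier_vec n" "v \<bullet> y = 0" "- y \<bullet> v = 0"
    using assms by (simp_all add: y_def skew_vec_orthogonal comm_scalar_prod[of v n])
  show ?thesis
  proof (rule acts_elementarilyI)
    have "- y = (- l) \<cdot>\<^sub>v skew_vec n i j v"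
      by (auto simp: y_def)
    then show "transvection n (- y) v \<in> elem_group n"
      using assms transpose_elem_group[of "transvection n v (- y)"]
      by (simp add: transvection_skew_in_elem_group transpose_transvection)
    show "transvection n (- y) v * transvection n y v = 1\<^sub>m n"
      "transvection n y v * transvection n (- y) v = 1\<^sub>m n"
      using assms y by (simp_all add: transvection_mult_inverse)
    have "transvection n y v *\<^sub>v w = w + y"
      using assms y by (simp add: transvection_mult_vec)
    then show "eo_gen n (n + i) j l *\<^sub>v (v @\<^sub>v w) =
        (transpose_mat (transvection n (- y) v) *\<^sub>v v) @\<^sub>v (transvection n y v *\<^sub>v w)"
      using assms y
      by (simp add: eo_gen_lower_upper_mult_vec transpose_transvection transvection_mult_vec_orthogonal y_def)
  qed simp
qed

lemma eo_gen_acts_elementarily: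
  assumes "3 \<le> n" "i < 2 * n" "j < 2 * n" "i \<noteq> j"
    and "v \<in> carrier_vec n" "w \<in> carrier_vec n" "v \<bullet> w = 1"
  shows "acts_elementarily n (eo_gen n i j l) v w"
proof -
  have block: "k < n \<or> (\<exists>k'. k = n + k' \<and> k' < n)" if "k < 2 * n" for k
    using that by presburger
  from block[OF assms(2)] block[OF assms(3)] assms show ?thesis
    by (auto intro: eo_gen_upper_acts_elementarily eo_gen_lower_acts_elementarily
        eo_gen_upper_lower_acts_elementarily eo_gen_lower_upper_acts_elementarily)
qed

lemma eo_group_carrier: "M \<in> eo_group n \<Longrightarrow> M \<in> carrier_mat (2 * n) (2 * n)"
  by (induction rule: eo_group.induct) (auto intro: mult_carrier_mat[OF eo_gen_carrier])

lemma eo_group_acts_elementarily: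
  assumes "M \<in> eo_group n" "3 \<le> n" "v \<in> carrier_vec n" "w \<in> carrier_vec n" "v \<bullet> w = 1"
  shows "acts_elementarily n M v w"
  using assms
proof (induction arbitrary: v w rule: eo_group.induct)
  case one
  then show ?case by (simp add: acts_elementarily_one)
next
  case (step A i j l)
  then show ?case
    by (intro acts_elementarily_mult) (auto simp: eo_group_carrier eo_gen_carrier eo_gen_acts_elementarily)
qed

theorem theorem4p1:
  fixes n :: nat and v w :: "'a::comm_ring_1 vec" and g :: "'a tens"
  assumes "n \<ge> 3"
    and "v \<in> carrier_vec n" and "w \<in> carrier_vec n"
    and "v \<bullet> w = 1"
    and "g \<in> epin_set n"
  shows "\<exists>\<sigma> \<in> elem_group n. \<exists>\<tau> \<in> carrier_mat n n.
           transpose_mat \<sigma> * \<tau> = 1\<^sub>m n \<and> \<tau> * transpose_mat \<sigma> = 1\<^sub>m n \<and>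
           (\<forall>y. clif_inverse n g y \<longrightarrow>
              clif_eq n (tmul g (tmul (hyp_emb n (v @\<^sub>v w)) y))
                        (hyp_emb n ((transpose_mat \<sigma> *\<^sub>v v) @\<^sub>v (transpose_mat \<tau> *\<^sub>v w))))"
proof -
  obtain M where "M \<in> eo_group n" and action: "\<And>y. clif_inverse n g y \<Longrightarrow>
      clif_eq n (tmul g (tmul (hyp_emb n (v @\<^sub>v w)) y)) (hyp_emb n (M *\<^sub>v (v @\<^sub>v w)))"
    using assms(2,3,5) append_vec_carrier_double unfolding epin_set_def by blast
  then obtain \<sigma> \<rho> where \<sigma>: "\<sigma> \<in> elem_group n" and \<rho>: "\<rho> \<in> carrier_mat n n"
    and inv: "\<sigma> * \<rho> = 1\<^sub>m n" "\<rho> * \<sigma> = 1\<^sub>m n"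
    and M: "M *\<^sub>v (v @\<^sub>v w) = (transpose_mat \<sigma> *\<^sub>v v) @\<^sub>v (\<rho> *\<^sub>v w)"
    using eo_group_acts_elementarily assms(1-4) unfolding acts_elementarily_def by blast
  have "transpose_mat \<sigma> * transpose_mat \<rho> = 1\<^sub>m n" "transpose_mat \<rho> * transpose_mat \<sigma> = 1\<^sub>m n"
    using transpose_mult[OF \<rho> elem_group_carrier[OF \<sigma>]] transpose_mult[OF elem_group_carrier[OF \<sigma>] \<rho>] inv
    by (metis transpose_one)+
  with \<sigma> \<rho> action M show ?thesis
    by (intro bexI[of _ \<sigma>] bexI[of _ "transpose_mat \<rho>"]) auto
qed

end
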